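(* Let $X \subseteq \mathbb{P}^N$ be an irreducible, nondegenerate variety over an algebraically closed field of characteristic zero, with generic rank $g$ and maximal rank $m$. For $1 \leq k \leq g-1$, $\sigma_k(X) \not\subset W_{2g-k+1}$. In particular, if $m=2g$, then for $1 \leq k \leq g-1$, $\sigma_k(X) \not\subset W_{m-k+1}$.
   Context: For a nondegenerate variety $X\subseteq\mathbb{P}^N$, the rank of a point $p$ is the least $r$ such that $p$ lies in the linear span of some $r$ distinct points of $X$; $W_k$ is the Zariski closure of the set of points of rank exactly $k$ (empty if there are none); $g$ is the rank of a general point and $m$ the maximum rank. The $k$-th secant variety $\sigma_k(X)$ is the closure of the set of points of rank at most $k$. *)

theory Defs
  imports "HOL-Computational_Algebra.Polynomial"
begin

text \<open>Projective space P^N over a field 'a is modelled through affine cones in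
  the affine space 'a^('n) of functions 'n \<Rightarrow> 'a, where CARD('n) = N+1.
  A point of P^N is represented by any nonzero vector; a subset of P^N by a cone
  of nonzero vectors (closed under nonzero scaling).\<close>

definition alg_closed_field :: "'a::field itself \<Rightarrow> bool" where
  "alg_closed_field _ \<longleftrightarrow> (\<forall>p :: 'a poly. degree p > 0 \<longrightarrow> (\<exists>x. poly p x = 0))"

inductive_set polyfun :: "(('n \<Rightarrow> 'a::comm_ring_1) \<Rightarrow> 'a) set" where
  pf_const: "(\<lambda>x. c) \<in> polyfun"
| pf_coord: "(\<lambda>x. x i) \<in> polyfun"
| pf_add: "f \<in> polyfun \<Longrightarrow> g \<in> polyfun \<Longrightarrow> (\<lambda>x. f x + g x) \<in> polyfun"
| pf_mult: "f \<in> polyfun \<Longrightarrow> g \<in> polyfun \<Longrightarrow> (\<lambda>x. f x * g x) \<in> polyfun"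

definition zariski_closed :: "('n \<Rightarrow> 'a::comm_ring_1) set \<Rightarrow> bool" where
  "zariski_closed A \<longleftrightarrow> (\<exists>F \<subseteq> polyfun. A = {x. \<forall>f\<in>F. f x = 0})"

definition zariski_closure :: "('n \<Rightarrow> 'a::comm_ring_1) set \<Rightarrow> ('n \<Rightarrow> 'a) set" where
  "zariski_closure S = \<Inter>{A. zariski_closed A \<and> S \<subseteq> A}"

text \<open>Closure in P^N of a cone S (given by nonzero vectors).\<close>
definition proj_closure :: "('n \<Rightarrow> 'a::comm_ring_1) set \<Rightarrow> ('n \<Rightarrow> 'a) set" where
  "proj_closure S = zariski_closure S - {(\<lambda>_. 0)}"

definition smult_vec :: "'a::times \<Rightarrow> ('n \<Rightarrow> 'a) \<Rightarrow> ('n \<Rightarrow> 'a)" where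
  "smult_vec c x = (\<lambda>i. c * x i)"

definition proj_cone :: "('n \<Rightarrow> 'a::field) set \<Rightarrow> bool" where
  "proj_cone X \<longleftrightarrow> (\<lambda>_. 0) \<notin> X \<and> (\<forall>x\<in>X. \<forall>c. c \<noteq> 0 \<longrightarrow> smult_vec c x \<in> X)"

definition proj_variety :: "('n \<Rightarrow> 'a::field) set \<Rightarrow> bool" where
  "proj_variety X \<longleftrightarrow> proj_cone X \<and> X \<noteq> {} \<and> proj_closure X = X \<and>
     (\<forall>A B. zariski_closed A \<and> zariski_closed B \<and> X \<subseteq> A \<union> B \<longrightarrow> X \<subseteq> A \<or> X \<subseteq> B)"

definition nondegenerate :: "('n::finite \<Rightarrow> 'a::field) set \<Rightarrow> bool" where
  "nondegenerate X \<longleftrightarrow> \<not> (\<exists>a. a \<noteq> (\<lambda>_. 0) \<and> (\<forall>x\<in>X. (\<Sum>i\<in>UNIV. a i * x i) = 0))"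

definition lin_span :: "('n \<Rightarrow> 'a::field) set \<Rightarrow> ('n \<Rightarrow> 'a) set" where
  "lin_span S = {v. \<exists>T c. finite T \<and> T \<subseteq> S \<and> v = (\<lambda>i. \<Sum>x\<in>T. c x * x i)}"

definition proj_distinct :: "('n \<Rightarrow> 'a::field) list \<Rightarrow> bool" where
  "proj_distinct xs \<longleftrightarrow> (\<forall>i<length xs. \<forall>j<length xs. i \<noteq> j \<longrightarrow>
      (\<forall>c. xs ! j \<noteq> smult_vec c (xs ! i)))"

definition spanned_by :: "('n \<Rightarrow> 'a::field) set \<Rightarrow> nat \<Rightarrow> ('n \<Rightarrow> 'a) \<Rightarrow> bool" where
  "spanned_by X r v \<longleftrightarrow> (\<exists>xs. length xs = r \<and> set xs \<subseteq> X \<and> proj_distinct xs \<and> v \<in> lin_span (set xs))"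

definition X_rank :: "('n \<Rightarrow> 'a::field) set \<Rightarrow> ('n \<Rightarrow> 'a) \<Rightarrow> nat" where
  "X_rank X v = (LEAST r. spanned_by X r v)"

definition W_set :: "('n \<Rightarrow> 'a::field) set \<Rightarrow> nat \<Rightarrow> ('n \<Rightarrow> 'a) set" where
  "W_set X k = proj_closure {v. v \<noteq> (\<lambda>_. 0) \<and> X_rank X v = k}"

definition secant_var :: "('n \<Rightarrow> 'a::field) set \<Rightarrow> nat \<Rightarrow> ('n \<Rightarrow> 'a) set" where
  "secant_var X k = proj_closure {v. v \<noteq> (\<lambda>_. 0) \<and> X_rank X v \<le> k}"

definition generic_rank :: "('n \<Rightarrow> 'a::field) set \<Rightarrow> nat \<Rightarrow> bool" where
  "generic_rank X g \<longleftrightarrow> (\<exists>A. zariski_closed A \<and> A \<noteq> UNIV \<and>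
      (\<forall>v. v \<noteq> (\<lambda>_. 0) \<and> v \<notin> A \<longrightarrow> X_rank X v = g))"

definition max_rank :: "('n \<Rightarrow> 'a::field) set \<Rightarrow> nat \<Rightarrow> bool" where
  "max_rank X m \<longleftrightarrow> (\<exists>v. v \<noteq> (\<lambda>_. 0) \<and> X_rank X v = m) \<and> (\<forall>v. v \<noteq> (\<lambda>_. 0) \<longrightarrow> X_rank X v \<le> m)"

end

theory Submission
  imports Defs "HOL-Library.Function_Algebras"
begin

text \<open>Write \<open>q = y + z\<close> for a general point \<open>q\<close> of rank \<open>g\<close>, where \<open>y\<close> is spanned by \<open>k\<close> of
  the \<open>g\<close> points of \<open>X\<close> spanning \<open>q\<close> and \<open>z\<close> by the remaining \<open>g - k\<close>. Then \<open>y \<in> \<sigma>\<^sub>k(X)\<close>.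
  If \<open>\<sigma>\<^sub>k(X) \<subseteq> W\<^sub>j\<close> with \<open>j = 2g - k + 1\<close>, then \<open>y\<close> is a limit of points \<open>w\<close> of rank \<open>j\<close>;
  since translation by \<open>z\<close> preserves Zariski closed sets and \<open>y + z\<close> is general, some such \<open>w\<close> has
  \<open>w + z\<close> general, i.e. of rank \<open>g\<close>. But then \<open>w = (w + z) - z\<close> has rank at most
  \<open>g + (g - k) < j\<close>, a contradiction.\<close>

interpretation vec: vector_space "smult_vec :: 'a::field \<Rightarrow> ('n \<Rightarrow> 'a) \<Rightarrow> ('n \<Rightarrow> 'a)"
  by unfold_locales (auto simp: smult_vec_def fun_eq_iff algebra_simps)

interpretation vec_pair:
  vector_space_pair "smult_vec :: 'a::field \<Rightarrow> ('n \<Rightarrow> 'a) \<Rightarrow> ('n \<Rightarrow> 'a)" "(*) :: 'a \<Rightarrow> 'a \<Rightarrow> 'a"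
  by unfold_locales (auto simp: algebra_simps)

lemma sum_fun_apply: "(\<Sum>a\<in>T. f a) i = (\<Sum>a\<in>T. f a i :: 'b::comm_monoid_add)"
  by (induct T rule: infinite_finite_induct) auto

lemma lin_span_eq_span: "lin_span S = vec.span (S :: ('n \<Rightarrow> 'a::field) set)"
  unfolding lin_span_def vec.span_explicit
  by (auto simp: fun_eq_iff sum_fun_apply smult_vec_def)

lemma linear_functional_eq_sum:
  assumes "Vector_Spaces.linear smult_vec ((*) :: 'a \<Rightarrow> 'a \<Rightarrow> 'a) f"
  shows "f x = (\<Sum>i\<in>UNIV. f (\<lambda>j. if j = i then 1 else 0) * (x :: 'n::finite \<Rightarrow> 'a::field) i)"
proof -
  have "x = (\<Sum>i\<in>UNIV. smult_vec (x i) (\<lambda>j. if j = i then 1 else 0))"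
    by (auto simp: fun_eq_iff sum_fun_apply smult_vec_def if_distrib cong: if_cong)
  then have "f x = (\<Sum>i\<in>UNIV. x i * f (\<lambda>j. if j = i then 1 else 0))"
    by (metis (no_types, lifting) assms sum.cong vec_pair.linear_scale vec_pair.linear_sum)
  then show ?thesis
    by (simp add: mult.commute)
qed

lemma span_eq_UNIV_if_nondegenerate:
  assumes "nondegenerate (X :: ('n::finite \<Rightarrow> 'a::field) set)"
  shows "vec.span X = UNIV"
proof (rule ccontr)
  assume "vec.span X \<noteq> UNIV"
  then obtain b where b: "b \<notin> vec.span X"
    by auto
  obtain B where B: "B \<subseteq> X" "vec.independent B" "X \<subseteq> vec.span B"
    using vec.maximal_independent_subset by blast
  have "b \<notin> vec.span B"
    using b B(1) vec.span_mono by blast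
  then have ind: "vec.independent (insert b B)"
    using B(2) by (rule vec.independent_insertI)
  define f where "f = vec_pair.construct (insert b B) (\<lambda>x. if x = b then (1::'a) else 0)"
  have lin: "Vector_Spaces.linear smult_vec (*) f"
    unfolding f_def using ind by (rule vec_pair.linear_construct)
  have fb: "f b = 1"
    unfolding f_def by (simp add: vec_pair.construct_basis[OF ind])
  have fB: "f x = 0" if "x \<in> B" for x
  proof -
    have "x \<noteq> b"
      using that \<open>b \<notin> vec.span B\<close> vec.span_base by blast
    then show ?thesis
      unfolding f_def using vec_pair.construct_basis[OF ind, of x] that by simp
  qed
  have fX: "f x = 0" if "x \<in> X" for x
    using vec_pair.linear_eq_0_on_span[OF lin fB] that B(3) by blast
  define a where "a = (\<lambda>i. f (\<lambda>j. if j = i then 1 else 0))"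
  have "a \<noteq> (\<lambda>_. 0)"
  proof
    assume "a = (\<lambda>_. 0)"
    then have "f b = 0"
      using linear_functional_eq_sum[OF lin, of b] by (simp add: a_def fun_eq_iff)
    with fb show False
      by simp
  qed
  moreover have "\<forall>x\<in>X. (\<Sum>i\<in>UNIV. a i * x i) = 0"
    unfolding a_def using fX linear_functional_eq_sum[OF lin] by metis
  ultimately show False
    using assms unfolding nondegenerate_def by blast
qed

lemma spanned_by_card_le:
  assumes "finite S" "S \<subseteq> X" "v \<in> vec.span S"
  shows "\<exists>r \<le> card S. spanned_by X r v"
  using assms
proof (induction S rule: finite_psubset_induct)
  case (psubset S)
  show ?case
  proof (cases "\<exists>x\<in>S. \<exists>y\<in>S. x \<noteq> y \<and> (\<exists>c. y = smult_vec c x)")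
    case True
    then obtain x y c where xy: "x \<in> S" "y \<in> S" "x \<noteq> y" "y = smult_vec c x"
      by blast
    then have "y \<in> vec.span (S - {y})"
      by (simp add: vec.span_base vec.span_scale)
    then have "vec.span (S - {y}) = vec.span S"
      using vec.span_redundant[of y "S - {y}"] xy(2) by (simp add: insert_absorb)
    then obtain r where "r \<le> card (S - {y})" "spanned_by X r v"
      using psubset xy(2) by (metis Diff_iff Diff_subset insertI1 psubsetI subset_trans)
    then show ?thesis
      by (meson card_Diff1_le le_trans)
  next
    case False
    obtain xs where xs: "set xs = S" "distinct xs"
      using finite_distinct_list[OF psubset.hyps] by blast
    have "proj_distinct xs"
      unfolding proj_distinct_def using False xs by (metis nth_eq_iff_index_eq nth_mem)
    then have "spanned_by X (card S) v"
      unfolding spanned_by_def lin_span_eq_span using xs psubset.prems distinct_card[OF xs(2)]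
      by (intro exI[of _ xs]) auto
    then show ?thesis
      by blast
  qed
qed

lemma X_rank_le_card:
  assumes "finite S" "S \<subseteq> X" "v \<in> vec.span S"
  shows "X_rank X v \<le> card S"
proof -
  obtain r where "r \<le> card S" "spanned_by X r v"
    using spanned_by_card_le[OF assms] by blast
  then show ?thesis
    unfolding X_rank_def using Least_le[of "\<lambda>r. spanned_by X r v" r] by linarith
qed

lemma X_rank_witness:
  assumes "v \<in> vec.span X"
  obtains S where "finite S" "S \<subseteq> X" "card S = X_rank X v" "v \<in> vec.span S"
proof -
  obtain T c where T: "finite T" "T \<subseteq> X" "v = (\<Sum>a\<in>T. smult_vec (c a) a)"
    using assms unfolding vec.span_explicit by blast
  have "v \<in> vec.span T"
    unfolding T(3) by (rule vec.span_sum, rule vec.span_scale, rule vec.span_base)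
  then obtain r where "spanned_by X r v"
    using spanned_by_card_le[OF T(1,2)] by blast
  then have "spanned_by X (X_rank X v) v"
    unfolding X_rank_def by (rule LeastI)
  then obtain xs where xs: "length xs = X_rank X v" "set xs \<subseteq> X" "v \<in> vec.span (set xs)"
    unfolding spanned_by_def lin_span_eq_span by blast
  then have "X_rank X v \<le> card (set xs)"
    by (intro X_rank_le_card) auto
  moreover have "card (set xs) \<le> X_rank X v"
    using card_length[of xs] xs(1) by simp
  ultimately show thesis
    using that[of "set xs"] xs by simp
qed

lemma X_rank_diff_le:
  assumes "u \<in> vec.span X" "v \<in> vec.span X"
  shows "X_rank X (u - v) \<le> X_rank X u + X_rank X v"
proof -
  obtain S where S: "finite S" "S \<subseteq> X" "card S = X_rank X u" "u \<in> vec.span S"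
    using X_rank_witness[OF assms(1)] .
  obtain T where T: "finite T" "T \<subseteq> X" "card T = X_rank X v" "v \<in> vec.span T"
    using X_rank_witness[OF assms(2)] .
  have "u - v \<in> vec.span (S \<union> T)"
    using S(4) T(4) vec.span_mono[of S "S \<union> T"] vec.span_mono[of T "S \<union> T"]
    by (blast intro: vec.span_diff)
  then have "X_rank X (u - v) \<le> card (S \<union> T)"
    using S T by (intro X_rank_le_card) auto
  then show ?thesis
    using card_Un_le[of S T] S(3) T(3) by linarith
qed

lemma X_rank_split:
  assumes "v \<in> vec.span X" "k \<le> X_rank X v"
  obtains y z where "v = y + z" "X_rank X y \<le> k" "X_rank X z \<le> X_rank X v - k"
proof -
  obtain S where S: "finite S" "S \<subseteq> X" "card S = X_rank X v" "v \<in> vec.span S"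
    using X_rank_witness[OF assms(1)] .
  obtain S1 where S1: "S1 \<subseteq> S" "card S1 = k"
    using obtain_subset_with_card_n[of k S] S(3) assms(2) by metis
  have "S = S1 \<union> (S - S1)"
    using S1(1) by blast
  then obtain y z where yz: "v = y + z" "y \<in> vec.span S1" "z \<in> vec.span (S - S1)"
    using S(4) vec.span_Un[of S1 "S - S1"] by auto
  have "finite S1"
    using S1(1) S(1) by (rule finite_subset)
  then have "X_rank X y \<le> k"
    using X_rank_le_card[of S1 X y] S1 S(2) yz(2) by auto
  moreover have "card (S - S1) = X_rank X v - k"
    using S(3) S1 \<open>finite S1\<close> by (simp add: card_Diff_subset)
  then have "X_rank X z \<le> X_rank X v - k"
    using X_rank_le_card[of "S - S1" X z] S(1,2) yz(3) by auto
  ultimately show thesis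
    using that yz(1) by blast
qed

lemma polyfun_translate: "f \<in> polyfun \<Longrightarrow> (\<lambda>x. f (x + z)) \<in> polyfun"
proof (induct rule: polyfun.induct)
  case (pf_coord i)
  show ?case
    using polyfun.pf_add[OF polyfun.pf_coord polyfun.pf_const, of i "z i"] by simp
qed (auto intro: polyfun.pf_const polyfun.pf_add polyfun.pf_mult)

lemma zariski_closed_translate:
  assumes "zariski_closed A"
  shows "zariski_closed {x. x + z \<in> A}"
proof -
  obtain F where F: "F \<subseteq> polyfun" "A = {x. \<forall>f\<in>F. f x = 0}"
    using assms unfolding zariski_closed_def by blast
  have "(\<lambda>f x. f (x + z)) ` F \<subseteq> polyfun"
    using F(1) polyfun_translate by blast
  moreover have "{x. x + z \<in> A} = {x. \<forall>g\<in>(\<lambda>f x. f (x + z)) ` F. g x = 0}"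
    unfolding F(2) by auto
  ultimately show ?thesis
    unfolding zariski_closed_def by blast
qed

lemma zariski_closed_singleton: "zariski_closed {w :: 'n \<Rightarrow> 'a::comm_ring_1}"
proof -
  let ?G = "range (\<lambda>i x. x i - w i)"
  have "(\<lambda>x. x i - w i) \<in> polyfun" for i
    using polyfun.pf_add[OF polyfun.pf_coord polyfun.pf_const, of i "- w i"] by simp
  then have "?G \<subseteq> polyfun"
    by auto
  moreover have "{w} = {x. \<forall>g\<in>?G. g x = 0}"
    by (auto simp: fun_eq_iff)
  ultimately show ?thesis
    unfolding zariski_closed_def by blast
qed

lemma zariski_closed_Un:
  assumes "zariski_closed A" "zariski_closed (B :: ('n \<Rightarrow> 'a::idom) set)"
  shows "zariski_closed (A \<union> B)"
proof -
  obtain F where F: "F \<subseteq> polyfun" "A = {x. \<forall>f\<in>F. f x = 0}"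
    using assms(1) unfolding zariski_closed_def by blast
  obtain G where G: "G \<subseteq> polyfun" "B = {x. \<forall>g\<in>G. g x = 0}"
    using assms(2) unfolding zariski_closed_def by blast
  let ?H = "(\<lambda>(f, g) x. f x * g x) ` (F \<times> G)"
  have "?H \<subseteq> polyfun"
    using F(1) G(1) by (auto intro: polyfun.pf_mult)
  moreover have "A \<union> B = {x. \<forall>h\<in>?H. h x = 0}"
    unfolding F(2) G(2) by auto
  ultimately show ?thesis
    unfolding zariski_closed_def by blast
qed

lemma zariski_closure_minimal: "zariski_closed C \<Longrightarrow> S \<subseteq> C \<Longrightarrow> zariski_closure S \<subseteq> C"
  unfolding zariski_closure_def by auto

lemma zariski_closure_superset: "S \<subseteq> zariski_closure S"
  unfolding zariski_closure_def by auto

lemma polyfun_on_line: "f \<in> polyfun \<Longrightarrow> \<exists>p. \<forall>t. f (\<lambda>i. t * e i) = poly p t"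
proof (induct rule: polyfun.induct)
  case (pf_const c)
  show ?case
    by (intro exI[of _ "[:c:]"]) simp
next
  case (pf_coord i)
  show ?case
    by (intro exI[of _ "[:0, e i:]"]) (simp add: mult.commute)
next
  case (pf_add f g)
  then obtain p q where "\<forall>t. f (\<lambda>i. t * e i) = poly p t" "\<forall>t. g (\<lambda>i. t * e i) = poly q t"
    by blast
  then show ?case
    by (intro exI[of _ "p + q"]) simp
next
  case (pf_mult f g)
  then obtain p q where "\<forall>t. f (\<lambda>i. t * e i) = poly p t" "\<forall>t. g (\<lambda>i. t * e i) = poly q t"
    by blast
  then show ?case
    by (intro exI[of _ "p * q"]) simp
qed

text \<open>If \<open>0 \<notin> A\<close>, a polynomial of \<open>A\<close> not vanishing at the origin has only finitely many zeros
  on the diagonal line.\<close>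
lemma nonzero_not_in_proper_closed:
  fixes A :: "('n \<Rightarrow> 'a::field) set"
  assumes "infinite (UNIV :: 'a set)" "zariski_closed A" "A \<noteq> UNIV"
  obtains q where "q \<noteq> 0" "q \<notin> A"
proof -
  obtain F where F: "F \<subseteq> polyfun" "A = {x. \<forall>f\<in>F. f x = 0}"
    using assms(2) unfolding zariski_closed_def by blast
  obtain w where w: "w \<notin> A"
    using assms(3) by blast
  show thesis
  proof (cases "w = 0")
    case False
    then show thesis
      using that w by blast
  next
    case True
    then obtain f where f: "f \<in> F" "f 0 \<noteq> 0"
      using w F by auto
    obtain p where "\<forall>t. f (\<lambda>_. t * 1) = poly p t"
      using polyfun_on_line[of f "\<lambda>_. 1"] f(1) F(1) by blast
    then have p: "f (\<lambda>_. t) = poly p t" for t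
      by simp
    have "poly p 0 \<noteq> 0"
      using p[of 0] f(2) by (simp add: zero_fun_def)
    then have "finite (insert 0 {t. poly p t = 0})"
      by (intro finite_insert[THEN iffD2] poly_roots_finite) auto
    then have "infinite (UNIV - insert 0 {t. poly p t = 0})"
      using assms(1) by (rule Diff_infinite_finite)
    then obtain t where "t \<in> UNIV - insert 0 {t. poly p t = 0}"
      using infinite_imp_nonempty by blast
    then have t: "t \<noteq> 0" "poly p t \<noteq> 0"
      by auto
    have "f (\<lambda>_. t) \<noteq> 0"
      using p[of t] t(2) by simp
    then have "(\<lambda>_. t) \<notin> A"
      using f(1) unfolding F(2) by auto
    moreover have "(\<lambda>_. t) \<noteq> (0 :: 'n \<Rightarrow> 'a)"
      using t by (simp add: fun_eq_iff)
    ultimately show thesis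
      using that by blast
  qed
qed

lemma mem_proj_closureI: "v \<in> S \<Longrightarrow> v \<noteq> 0 \<Longrightarrow> v \<in> proj_closure S"
  unfolding proj_closure_def zero_fun_def using zariski_closure_superset by blast

lemma secant_var_not_subset_W_set:
  fixes X :: "('n::finite \<Rightarrow> 'a::field_char_0) set"
  assumes span: "vec.span X = UNIV" and gen: "generic_rank X g" and k: "1 \<le> k" "k \<le> g"
  shows "\<not> secant_var X k \<subseteq> W_set X (2 * g - k + 1)"
proof
  define j where "j = 2 * g - k + 1"
  assume "secant_var X k \<subseteq> W_set X (2 * g - k + 1)"
  then have sub: "secant_var X k \<subseteq> W_set X j"
    by (simp add: j_def)
  obtain A where A: "zariski_closed A" "A \<noteq> UNIV"
    and generic: "\<And>v. v \<noteq> 0 \<Longrightarrow> v \<notin> A \<Longrightarrow> X_rank X v = g"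
    using gen unfolding generic_rank_def zero_fun_def by blast
  obtain q where q: "q \<noteq> 0" "q \<notin> A"
    using nonzero_not_in_proper_closed[OF infinite_UNIV_char_0 A] by blast
  obtain y z where yz: "q = y + z" "X_rank X y \<le> k" "X_rank X z \<le> g - k"
    using X_rank_split[of q X k] span k generic[OF q] by auto
  have "y \<noteq> 0"
  proof
    assume "y = 0"
    then have "X_rank X q \<le> g - k"
      using yz by simp
    then show False
      using generic[OF q] k by linarith
  qed
  then have "y \<in> secant_var X k"
    unfolding secant_var_def using yz(2) by (intro mem_proj_closureI) (auto simp: zero_fun_def)
  then have y_W: "y \<in> W_set X j"
    using sub by blast
  define C where "C = {w. w + z \<in> A \<union> {0}}"
  have closed_C: "zariski_closed C"
    unfolding C_def by (rule zariski_closed_translate[OF zariski_closed_Un[OF A(1) zariski_closed_singleton]])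
  have "y \<notin> C"
    using q yz(1) by (simp add: C_def)
  have "\<not> {v. v \<noteq> (\<lambda>_. 0) \<and> X_rank X v = j} \<subseteq> C"
  proof
    assume "{v. v \<noteq> (\<lambda>_. 0) \<and> X_rank X v = j} \<subseteq> C"
    then have "W_set X j \<subseteq> C"
      unfolding W_set_def proj_closure_def using zariski_closure_minimal[OF closed_C] by blast
    with y_W \<open>y \<notin> C\<close> show False
      by blast
  qed
  then obtain w where w: "X_rank X w = j" "w + z \<noteq> 0" "w + z \<notin> A"
    unfolding C_def by blast
  have "X_rank X w \<le> X_rank X (w + z) + X_rank X z"
    using X_rank_diff_le[of "w + z" X z] span by simp
  also have "\<dots> \<le> g + (g - k)"
    using generic[OF w(2,3)] yz(3) by simp
  finally show False
    using w(1) k unfolding j_def by linarith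
qed

theorem corollary3p4:
  fixes X :: "('n::finite \<Rightarrow> 'a::field_char_0) set" and g m :: nat
  assumes "alg_closed_field TYPE('a)"
    and "proj_variety X" and "nondegenerate X"
    and "generic_rank X g" and "max_rank X m"
  shows "(\<forall>k. 1 \<le> k \<and> k \<le> g - 1 \<longrightarrow> \<not> secant_var X k \<subseteq> W_set X (2 * g - k + 1))
       \<and> (m = 2 * g \<longrightarrow> (\<forall>k. 1 \<le> k \<and> k \<le> g - 1 \<longrightarrow> \<not> secant_var X k \<subseteq> W_set X (m - k + 1)))"
  using secant_var_not_subset_W_set[OF span_eq_UNIV_if_nondegenerate[OF assms(3)] assms(4)]
  by auto

end
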